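(* Let $g\ge1$ and $n\ge3$. \begin{enumerate} \item For all $1\le r\le n$: $r^r\,t_{g,n-r+1}^{r+1}\le t_{g,n}^2$, with equality iff $r=1$. \item If $(n,g)\neq(3,1)$, then for all $1\le r\le n-1$: $(r+1)^r\,t_{g,n-r}^{r+1}\le 2t_{g,n-1}^2$, with equality iff $r=1$ or $(g,r,n)\in\{(1,2,4),(2,2,3)\}$. \item If $(n,g)\notin\{(4,1),(4,2),(5,1)\}$, then for all $1\le r\le n-2$: $(r+2)^r\,t_{g,n-r-1}^{r+1}\le 3t_{g,n-2}^2$, with equality iff $r=1$ or $(g,r,n)=(3,2,4)$. \end{enumerate}
   Context: Sylvester sequences: $s_{g,1}=g+1$, $s_{g,k+1}=s_{g,k}(s_{g,k}-1)+1$, $t_{g,k}=s_{g,k}-1$. *)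

theory Defs
  imports Main
begin

(* Sylvester sequence s_{g,k}, indexed from k = 1: s_{g,1} = g+1,
   s_{g,k+1} = s_{g,k}(s_{g,k}-1)+1.  The value at k = 0 is an unused
   convention (set to g+1 as well). *)
fun sylv :: "nat \<Rightarrow> nat \<Rightarrow> nat" where
  "sylv g 0 = g + 1"
| "sylv g (Suc 0) = g + 1"
| "sylv g (Suc (Suc k)) = sylv g (Suc k) * (sylv g (Suc k) - 1) + 1"

definition tsylv :: "nat \<Rightarrow> nat \<Rightarrow> nat" where
  "tsylv g k = sylv g k - 1"

end

theory Submission
  imports Defs
begin

text \<open>
  Put a = t(g,m). Then t(g,m+k) = p^k(a) for the pronic map p(x) = x(x + 1), and the three
  parts are the instances c = 0, 1, 2 of  (r + c)^r a^(r+1) \<le> (c + 1) p^(r-1)(a)^2.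
  For r = 1 both sides agree. For r = 2 the inequality reads, after cancelling a^2,
  (c + 2)^2 a \<le> (c + 1)(a + 1)^2; the difference of the two sides is ((c + 1)a - 1)(a - c - 1),
  which gives the equality cases and shows that it fails exactly when a \<le> c.
  For r \<ge> 3 it is strict, by induction on r: the step multiplies the right side by
  (p^(r-1)(a) + 1)^2 but the left side only by a (r + 1 + c)^(r+1) / (r + c)^r, and the
  iterates grow doubly exponentially. The base case r = 3 fails only for c = 2, a = 1, where
  the induction starts at r = 4. The pairs (n, g) excluded in the theorem are exactly those
  that run into one of these failures.
\<close>

definition pronic :: "nat \<Rightarrow> nat" where
  "pronic x = x * (x + 1)"

lemma pronic_mono: "a \<le> b \<Longrightarrow> pronic a \<le> pronic b"
  unfolding pronic_def by (intro mult_mono) auto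

lemma pronic_iter_ge_self: "a \<le> (pronic ^^ k) a"
  by (induction k) (auto simp: pronic_def intro: order_trans)

lemma pronic_iter_ge_mult: "a * (pronic ^^ k) 1 \<le> (pronic ^^ k) a"
proof (induction k)
  case (Suc k)
  let ?u = "(pronic ^^ k) 1"
  have "a * pronic ?u \<le> pronic (a * ?u)"
    by (cases "a = 0") (auto simp: pronic_def algebra_simps)
  also have "\<dots> \<le> pronic ((pronic ^^ k) a)"
    using Suc.IH by (rule pronic_mono)
  finally show ?case by simp
qed simp

lemma pronic_iter_one_ge: "3 \<le> k \<Longrightarrow> 2 ^ (k + 2) \<le> (pronic ^^ k) (1::nat)"
proof (induction k rule: dec_induct)
  case base
  show ?case by (simp add: pronic_def numeral_eq_Suc)
next
  case (step k)
  let ?u = "(pronic ^^ k) 1"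
  have "2 ^ (Suc k + 2) \<le> 2 * ?u" using step.IH by simp
  also have "\<dots> \<le> pronic ?u" using pronic_iter_ge_self[of 1 k] by (simp add: pronic_def)
  finally show ?case by simp
qed

lemma pronic_iter_one_growth:
  assumes "2 \<le> k" "c \<le> 2"
  shows "(k + 2 + c) ^ (k + 2) \<le> (k + 1 + c) ^ (k + 1) * ((pronic ^^ k) 1) ^ 2"
proof (cases "k = 2")
  case True
  have "(pronic ^^ 2) (1::nat) = 6" by (simp add: pronic_def numeral_2_eq_2)
  moreover have "c = 0 \<or> c = 1 \<or> c = 2" using assms(2) by auto
  ultimately show ?thesis using True by auto
next
  case False
  let ?N = "k + 1 + c" and ?B = "2 ^ (k + 2) :: nat"
  have "k + 3 < ?B" by (induction k) auto
  then have N_less: "?N < ?B" using assms(2) by linarith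
  have "(k + 2 + c) ^ (k + 2) \<le> (2 * ?N) ^ (k + 2)" by (intro power_mono) auto
  also have "\<dots> = ?B * ?N * ?N ^ (k + 1)"
  proof -
    have "?N ^ (k + 2) = ?N * ?N ^ (k + 1)" by simp
    then show ?thesis unfolding power_mult_distrib by (simp only: mult.assoc)
  qed
  also have "\<dots> \<le> ?B * ?B * ?N ^ (k + 1)"
    using N_less by (intro mult_right_mono mult_left_mono) simp_all
  also have "\<dots> \<le> ((pronic ^^ k) 1) ^ 2 * ?N ^ (k + 1)"
  proof -
    have "?B \<le> (pronic ^^ k) 1" using pronic_iter_one_ge[of k] False assms(1) by simp
    then show ?thesis unfolding power2_eq_square by (intro mult_right_mono mult_mono) simp_all
  qed
  finally show ?thesis by (simp add: mult.commute)
qed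

lemma pronic_iter_growth:
  assumes "1 \<le> a" "2 \<le> k" "c \<le> 2"
  shows "(k + 2 + c) ^ (k + 2) * a < (k + 1 + c) ^ (k + 1) * ((pronic ^^ k) a + 1) ^ 2"
proof -
  let ?u = "(pronic ^^ k) 1" and ?f = "(pronic ^^ k) a"
  have "?u ^ 2 * a \<le> (a * ?u) ^ 2"
    using assms(1) by (simp add: power2_eq_square)
  also have "\<dots> \<le> ?f ^ 2" using pronic_iter_ge_mult by (rule power_mono) simp
  also have "\<dots> < (?f + 1) ^ 2" by (simp add: power_strict_mono)
  finally have "?u ^ 2 * a < (?f + 1) ^ 2" .
  have "(k + 2 + c) ^ (k + 2) * a \<le> (k + 1 + c) ^ (k + 1) * (?u ^ 2 * a)"
    using pronic_iter_one_growth[OF assms(2,3)] by (simp add: mult.assoc[symmetric])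
  moreover have "(k + 1 + c) ^ (k + 1) * (?u ^ 2 * a) < (k + 1 + c) ^ (k + 1) * (?f + 1) ^ 2"
    using \<open>?u ^ 2 * a < (?f + 1) ^ 2\<close> by simp
  ultimately show ?thesis by (rule le_less_trans)
qed

lemma pronic_iter_bound_step:
  assumes "1 \<le> a" "2 \<le> k" "c \<le> 2"
    and "(k + 1 + c) ^ (k + 1) * a ^ (k + 2) \<le> (c + 1) * ((pronic ^^ k) a) ^ 2"
  shows "(Suc k + 1 + c) ^ (Suc k + 1) * a ^ (Suc k + 2) < (c + 1) * ((pronic ^^ Suc k) a) ^ 2"
proof -
  let ?f = "(pronic ^^ k) a"
  have "(Suc k + 1 + c) ^ (Suc k + 1) * a ^ (Suc k + 2) = ((k + 2 + c) ^ (k + 2) * a) * a ^ (k + 2)"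
    by simp
  also have "\<dots> < ((k + 1 + c) ^ (k + 1) * (?f + 1) ^ 2) * a ^ (k + 2)"
    using pronic_iter_growth[OF assms(1-3)] assms(1) by simp
  also have "\<dots> = ((k + 1 + c) ^ (k + 1) * a ^ (k + 2)) * (?f + 1) ^ 2"
    by (simp only: ac_simps)
  also have "\<dots> \<le> ((c + 1) * ?f ^ 2) * (?f + 1) ^ 2"
    using assms(4) by (rule mult_right_mono) simp
  also have "\<dots> = (c + 1) * ((pronic ^^ Suc k) a) ^ 2"
  proof -
    have "(pronic ^^ Suc k) a = ?f * (?f + 1)" by (simp add: pronic_def)
    then show ?thesis by (simp only: power_mult_distrib mult.assoc)
  qed
  finally show ?thesis .
qed

lemma pronic_iter_bound_from:
  assumes "1 \<le> a" "c \<le> 2" "2 \<le> k0" "k0 \<le> k"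
    and "(k0 + 1 + c) ^ (k0 + 1) * a ^ (k0 + 2) < (c + 1) * ((pronic ^^ k0) a) ^ 2"
  shows "(k + 1 + c) ^ (k + 1) * a ^ (k + 2) < (c + 1) * ((pronic ^^ k) a) ^ 2"
  using assms(4)
proof (induction k rule: dec_induct)
  case base
  show ?case by (rule assms(5))
next
  case (step k)
  show ?case
    using pronic_iter_bound_step[OF assms(1) _ assms(2) less_imp_le[OF step.IH]] step.hyps assms(3)
    by simp
qed

lemma pronic_iter_bound_two:
  assumes "1 \<le> a" "c \<le> 2" "\<not> (c = 2 \<and> a = 1)"
  shows "(3 + c) ^ 3 * a ^ 4 < (c + 1) * ((pronic ^^ 2) a) ^ 2"
proof -
  have f2: "(pronic ^^ 2) a = a * (a + 1) * (a * (a + 1) + 1)"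
    by (simp add: pronic_def numeral_2_eq_2)
  have c: "c = 0 \<or> c = 1 \<or> c = 2" using assms(2) by auto
  show ?thesis
  proof (cases "a = 1")
    case True
    then have "(pronic ^^ 2) a = 6" using f2 by simp
    then show ?thesis using c assms(3) \<open>a = 1\<close> by auto
  next
    case False
    then have "2 * 3 \<le> a * (a + 1)" using assms(1) by (intro mult_mono) auto
    have "a * a < a * (a + 1)" using assms(1) by simp
    moreover have "7 \<le> a * (a + 1) + 1" using \<open>2 * 3 \<le> a * (a + 1)\<close> by simp
    ultimately have "a * a * 7 < a * (a + 1) * (a * (a + 1) + 1)"
      by (rule mult_less_le_imp_less) simp_all
    then have "a * a * 7 < (pronic ^^ 2) a" unfolding f2 .
    then have "(a * a * 7) ^ 2 < ((pronic ^^ 2) a) ^ 2" by (rule power_strict_mono) auto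
    then have f2_big: "49 * a ^ 4 < ((pronic ^^ 2) a) ^ 2"
      by (simp add: power2_eq_square power4_eq_xxxx ac_simps)
    have "(3 + c) ^ 3 * a ^ 4 \<le> (c + 1) * (49 * a ^ 4)"
    proof -
      have "(3 + c) ^ 3 \<le> 49 * (c + 1)" using c by auto
      then show ?thesis by (metis mult.assoc mult.commute mult_le_mono1)
    qed
    also have "\<dots> < (c + 1) * ((pronic ^^ 2) a) ^ 2"
      using f2_big by (intro mult_strict_left_mono) simp_all
    finally show ?thesis .
  qed
qed

lemma quadratic_bound:
  fixes a c :: nat
  assumes "c + 1 \<le> a"
  shows "(c + 2) ^ 2 * a \<le> (c + 1) * (a + 1) ^ 2 \<and> ((c + 2) ^ 2 * a = (c + 1) * (a + 1) ^ 2 \<longleftrightarrow> a = c + 1)"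
proof -
  obtain d where a: "a = c + 1 + d" using assms le_Suc_ex by blast
  \<comment> \<open>the factorisation ((c + 1)a - 1)(a - c - 1) of the difference, free of subtraction\<close>
  have "(c + 1) * (a + 1) ^ 2 = (c + 2) ^ 2 * a + (c * (c + 2) + (c + 1) * d) * d"
    unfolding a by (simp add: power2_eq_square algebra_simps)
  then show ?thesis unfolding a by auto
qed

lemma pronic_iter_power_bound:
  assumes "1 \<le> a" "c \<le> 2" "k = 1 \<Longrightarrow> c + 1 \<le> a" "\<not> (c = 2 \<and> a = 1 \<and> k = 2)"
  shows "(k + 1 + c) ^ (k + 1) * a ^ (k + 2) \<le> (c + 1) * ((pronic ^^ k) a) ^ 2 \<and>
    ((k + 1 + c) ^ (k + 1) * a ^ (k + 2) = (c + 1) * ((pronic ^^ k) a) ^ 2 \<longleftrightarrow>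
      k = 0 \<or> (k = 1 \<and> a = c + 1))"
proof -
  consider "k = 0" | "k = 1" | "2 \<le> k" by linarith
  then show ?thesis
  proof cases
    case 1
    then show ?thesis by (simp add: power2_eq_square)
  next
    case 2
    have L: "(k + 1 + c) ^ (k + 1) * a ^ (k + 2) = a ^ 2 * ((c + 2) ^ 2 * a)"
      using 2 by (simp add: power2_eq_square power3_eq_cube algebra_simps)
    have f1: "(pronic ^^ k) a = a * (a + 1)" using 2 by (simp add: pronic_def)
    have R: "(c + 1) * ((pronic ^^ k) a) ^ 2 = a ^ 2 * ((c + 1) * (a + 1) ^ 2)"
      unfolding f1 power_mult_distrib by (simp only: ac_simps)
    have "0 < a ^ 2" using assms(1) by simp
    then show ?thesis
      unfolding L R using quadratic_bound[OF assms(3)[OF 2]] 2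
      by (simp only: mult_le_cancel1 mult_cancel1) simp
  next
    case 3
    have "(k + 1 + c) ^ (k + 1) * a ^ (k + 2) < (c + 1) * ((pronic ^^ k) a) ^ 2"
    proof (cases "c = 2 \<and> a = 1")
      case True
      \<comment> \<open>the bound fails at k = 2 (5^3 > 3 * 6^2), so the induction starts at k = 3\<close>
      have "(pronic ^^ 3) (1::nat) = 42" by (simp add: pronic_def numeral_3_eq_3)
      then have "(3 + 1 + c) ^ (3 + 1) * a ^ (3 + 2) < (c + 1) * ((pronic ^^ 3) a) ^ 2"
        using True by simp
      moreover have "3 \<le> k" using 3 True assms(4) by auto
      ultimately show ?thesis using pronic_iter_bound_from[OF assms(1,2), of 3 k] by simp
    next
      case False
      then have "(2 + 1 + c) ^ (2 + 1) * a ^ (2 + 2) < (c + 1) * ((pronic ^^ 2) a) ^ 2"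
        using pronic_iter_bound_two[OF assms(1,2)] by simp
      then show ?thesis using pronic_iter_bound_from[OF assms(1,2), of 2 k] 3 by simp
    qed
    then show ?thesis using 3 by simp
  qed
qed

lemma sylv_pos: "0 < sylv g k"
  by (induction g k rule: sylv.induct) auto

lemma tsylv_one [simp]: "tsylv g (Suc 0) = g"
  unfolding tsylv_def by simp

lemma tsylv_Suc: "1 \<le> m \<Longrightarrow> tsylv g (Suc m) = pronic (tsylv g m)"
  using sylv_pos[of g m] by (cases m) (auto simp: tsylv_def pronic_def)

lemma tsylv_add: "1 \<le> m \<Longrightarrow> tsylv g (m + k) = (pronic ^^ k) (tsylv g m)"
  by (induction k) (simp_all add: tsylv_Suc)

lemma tsylv_two: "tsylv g 2 = pronic g"
  using tsylv_Suc[of 1 g] by (simp add: numeral_2_eq_2)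

lemma tsylv_ge: "1 \<le> m \<Longrightarrow> g \<le> tsylv g m"
  using tsylv_add[of 1 g "m - 1"] pronic_iter_ge_self by simp

lemma tsylv_le_3_cases:
  assumes "1 \<le> g" "1 \<le> m" "tsylv g m \<le> 3"
  shows "(m = 1 \<and> tsylv g m = g) \<or> (m = 2 \<and> g = 1 \<and> tsylv g m = 2)"
proof -
  have six: "6 \<le> tsylv g (3 + j)" for j
  proof -
    have "pronic (pronic 1) \<le> pronic (pronic g)" using assms(1) by (intro pronic_mono) auto
    also have "\<dots> = tsylv g 3" using tsylv_Suc[of 2 g] tsylv_two by (simp add: numeral_3_eq_3)
    also have "\<dots> \<le> tsylv g (3 + j)" using tsylv_add[of 3 g j] pronic_iter_ge_self by simp
    finally show ?thesis by (simp add: pronic_def)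
  qed
  have "m \<le> 2"
  proof (rule ccontr)
    assume "\<not> m \<le> 2"
    then obtain j where "m = 3 + j" using le_Suc_ex[of 3 m] by auto
    then show False using six[of j] assms(3) by simp
  qed
  then consider "m = 1" | "m = 2" using assms(2) by linarith
  then show ?thesis
  proof cases
    case 2
    have "g = 1"
    proof (rule ccontr)
      assume "g \<noteq> 1"
      then have "pronic 2 \<le> tsylv g m" using 2 assms(1) tsylv_two pronic_mono[of 2 g] by simp
      then show False using assms(3) by (simp add: pronic_def)
    qed
    then show ?thesis using 2 tsylv_two by (simp add: pronic_def)
  qed simp
qed

lemma tsylv_power_bound:
  assumes "1 \<le> g" "1 \<le> m" "1 \<le> r" "c \<le> 2"
    and "r = 2 \<Longrightarrow> c + 1 \<le> tsylv g m" "\<not> (c = 2 \<and> tsylv g m = 1 \<and> r = 3)"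
  shows "(r + c) ^ r * tsylv g m ^ (r + 1) \<le> (c + 1) * tsylv g (m + r - 1) ^ 2 \<and>
    ((r + c) ^ r * tsylv g m ^ (r + 1) = (c + 1) * tsylv g (m + r - 1) ^ 2 \<longleftrightarrow>
      r = 1 \<or> (r = 2 \<and> tsylv g m = c + 1))"
proof -
  obtain k where r: "r = k + 1" using assms(3) by (cases r) auto
  have "1 \<le> tsylv g m" using tsylv_ge[OF assms(2), of g] assms(1) by linarith
  moreover have "k = 1 \<Longrightarrow> c + 1 \<le> tsylv g m" and "\<not> (c = 2 \<and> tsylv g m = 1 \<and> k = 2)"
    using assms(5,6) r by simp_all
  ultimately have "(k + 1 + c) ^ (k + 1) * tsylv g m ^ (k + 2) \<le> (c + 1) * tsylv g (m + k) ^ 2 \<and>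
      ((k + 1 + c) ^ (k + 1) * tsylv g m ^ (k + 2) = (c + 1) * tsylv g (m + k) ^ 2 \<longleftrightarrow>
        k = 0 \<or> (k = 1 \<and> tsylv g m = c + 1))"
    unfolding tsylv_add[OF assms(2)] using assms(4) by (intro pronic_iter_power_bound) simp_all
  moreover have "m + (k + 1) - 1 = m + k" "k + 1 + 1 = k + 2"
    "k + 1 = 1 \<longleftrightarrow> k = 0" "k + 1 = 2 \<longleftrightarrow> k = 1"
    by simp_all
  ultimately show ?thesis unfolding r by (simp only:)
qed

lemma tsylv_power_le_square:
  assumes "1 \<le> g" "3 \<le> n" and r: "1 \<le> r" "r \<le> n"
  shows "r ^ r * tsylv g (n - r + 1) ^ (r + 1) \<le> tsylv g n ^ 2 \<and>
    (r ^ r * tsylv g (n - r + 1) ^ (r + 1) = tsylv g n ^ 2 \<longleftrightarrow> r = 1)"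
proof -
  define m where "m = n - r + 1"
  have m: "1 \<le> m" "m + r - 1 = n" using r unfolding m_def by auto
  have eq: "(r = 2 \<and> tsylv g m = 1) \<longleftrightarrow> False"
    using tsylv_le_3_cases[OF assms(1) m(1)] assms(2) unfolding m_def by auto
  have "1 \<le> tsylv g m" using tsylv_ge[OF m(1), of g] assms(1) by simp
  then have "(r + 0) ^ r * tsylv g m ^ (r + 1) \<le> (0 + 1) * tsylv g (m + r - 1) ^ 2 \<and>
      ((r + 0) ^ r * tsylv g m ^ (r + 1) = (0 + 1) * tsylv g (m + r - 1) ^ 2 \<longleftrightarrow>
        r = 1 \<or> (r = 2 \<and> tsylv g m = 0 + 1))"
    using r by (intro tsylv_power_bound[OF assms(1) m(1)]) simp_all
  from this[unfolded m(2) add_0_right add_0 mult_1 eq] show ?thesis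
    unfolding m_def by simp
qed

lemma tsylv_power_le_double_square:
  assumes "1 \<le> g" "3 \<le> n" and excl: "(n, g) \<noteq> (3, 1)" and r: "1 \<le> r" "r \<le> n - 1"
  shows "(r + 1) ^ r * tsylv g (n - r) ^ (r + 1) \<le> 2 * tsylv g (n - 1) ^ 2 \<and>
    ((r + 1) ^ r * tsylv g (n - r) ^ (r + 1) = 2 * tsylv g (n - 1) ^ 2 \<longleftrightarrow>
      r = 1 \<or> (g, r, n) \<in> {(1, 2, 4), (2, 2, 3)})"
proof -
  define m where "m = n - r"
  have m: "1 \<le> m" "m + r - 1 = n - 1" using assms(2) r unfolding m_def by auto
  note small = tsylv_le_3_cases[OF assms(1) m(1)]
  have "1 + 1 \<le> tsylv g m" if "r = 2"
  proof (rule ccontr)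
    assume "\<not> 1 + 1 \<le> tsylv g m"
    then have "m = 1 \<and> tsylv g m = g" using small by simp
    then have "(n, g) = (3, 1)"
      using that \<open>\<not> 1 + 1 \<le> tsylv g m\<close> assms(1) unfolding m_def by auto
    with excl show False by contradiction
  qed
  then have bound: "(r + 1) ^ r * tsylv g m ^ (r + 1) \<le> (1 + 1) * tsylv g (m + r - 1) ^ 2 \<and>
      ((r + 1) ^ r * tsylv g m ^ (r + 1) = (1 + 1) * tsylv g (m + r - 1) ^ 2 \<longleftrightarrow>
        r = 1 \<or> (r = 2 \<and> tsylv g m = 1 + 1))"
    using r by (intro tsylv_power_bound[OF assms(1) m(1)]) simp_all
  have eq: "(r = 2 \<and> tsylv g m = 2) \<longleftrightarrow> (g, r, n) \<in> {(1, 2, 4), (2, 2, 3)}"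
    using small assms(2) unfolding m_def by (auto simp: tsylv_two pronic_def)
  from bound[unfolded one_add_one eq m(2), unfolded m_def] show ?thesis .
qed

lemma tsylv_power_le_triple_square:
  assumes "1 \<le> g" "3 \<le> n" and excl: "(n, g) \<notin> {(4, 1), (4, 2), (5, 1)}"
    and r: "1 \<le> r" "r \<le> n - 2"
  shows "(r + 2) ^ r * tsylv g (n - r - 1) ^ (r + 1) \<le> 3 * tsylv g (n - 2) ^ 2 \<and>
    ((r + 2) ^ r * tsylv g (n - r - 1) ^ (r + 1) = 3 * tsylv g (n - 2) ^ 2 \<longleftrightarrow>
      r = 1 \<or> (g, r, n) = (3, 2, 4))"
proof -
  define m where "m = n - r - 1"
  have m: "1 \<le> m" "m + r - 1 = n - 2" using r unfolding m_def by auto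
  note small = tsylv_le_3_cases[OF assms(1) m(1)]
  have "2 + 1 \<le> tsylv g m" if "r = 2"
  proof (rule ccontr)
    assume "\<not> 2 + 1 \<le> tsylv g m"
    then have "(m = 1 \<and> tsylv g m = g) \<or> (m = 2 \<and> g = 1 \<and> tsylv g m = 2)"
      using small by simp
    then have "(n, g) \<in> {(4, 1), (4, 2), (5, 1)}"
      using that \<open>\<not> 2 + 1 \<le> tsylv g m\<close> assms(1) unfolding m_def by auto
    with excl show False by contradiction
  qed
  moreover have "\<not> (tsylv g m = 1 \<and> r = 3)"
    using small excl unfolding m_def by auto
  ultimately have bound: "(r + 2) ^ r * tsylv g m ^ (r + 1) \<le> (2 + 1) * tsylv g (m + r - 1) ^ 2 \<and>
      ((r + 2) ^ r * tsylv g m ^ (r + 1) = (2 + 1) * tsylv g (m + r - 1) ^ 2 \<longleftrightarrow>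
        r = 1 \<or> (r = 2 \<and> tsylv g m = 2 + 1))"
    using r by (intro tsylv_power_bound[OF assms(1) m(1)]) simp_all
  have eq: "(r = 2 \<and> tsylv g m = 3) \<longleftrightarrow> (g, r, n) = (3, 2, 4)"
    using small assms(2) unfolding m_def by auto
  have three: "(2::nat) + 1 = 3" by simp
  from bound[unfolded three eq m(2), unfolded m_def] show ?thesis .
qed

theorem lemma3p11:
  fixes g n :: nat
  assumes "g \<ge> 1" and "n \<ge> 3"
  shows "(\<forall>r. 1 \<le> r \<and> r \<le> n \<longrightarrow>
            r ^ r * tsylv g (n - r + 1) ^ (r + 1) \<le> tsylv g n ^ 2 \<and>
            (r ^ r * tsylv g (n - r + 1) ^ (r + 1) = tsylv g n ^ 2 \<longleftrightarrow> r = 1))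
       \<and> ((n, g) \<noteq> (3, 1) \<longrightarrow>
          (\<forall>r. 1 \<le> r \<and> r \<le> n - 1 \<longrightarrow>
            (r + 1) ^ r * tsylv g (n - r) ^ (r + 1) \<le> 2 * tsylv g (n - 1) ^ 2 \<and>
            ((r + 1) ^ r * tsylv g (n - r) ^ (r + 1) = 2 * tsylv g (n - 1) ^ 2 \<longleftrightarrow>
               r = 1 \<or> (g, r, n) \<in> {(1, 2, 4), (2, 2, 3)})))
       \<and> ((n, g) \<notin> {(4, 1), (4, 2), (5, 1)} \<longrightarrow>
          (\<forall>r. 1 \<le> r \<and> r \<le> n - 2 \<longrightarrow>
            (r + 2) ^ r * tsylv g (n - r - 1) ^ (r + 1) \<le> 3 * tsylv g (n - 2) ^ 2 \<and>
            ((r + 2) ^ r * tsylv g (n - r - 1) ^ (r + 1) = 3 * tsylv g (n - 2) ^ 2 \<longleftrightarrow>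
               r = 1 \<or> (g, r, n) = (3, 2, 4))))"
  using tsylv_power_le_square[OF assms] tsylv_power_le_double_square[OF assms]
    tsylv_power_le_triple_square[OF assms]
  by blast

end
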